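(* Let $p$ be a state with $p\neq g$ (equivalently, the slopes $p_i/g_i$ of $\beta(p)$ are not all equal). Then the Gibbs state $g$ lies in the interior of $p^{TP}=\{Tp:T\in TP(d)\}$, taken relative to the affine hyperplane $\{x\in\mathbb{R}^d:\sum_i x_i=1\}$.
   Context: Fix $d\ge 2$, $\beta\in(0,\infty)$ and pairwise distinct reals $E_0=0,E_1,\dots,E_{d-1}$. Put $q_{m,n}=e^{-\beta(E_m-E_n)}$, $Z=\sum_j q_{j,0}$, and the Gibbs vector $g_i=q_{i,0}/Z$. A state is a probability vector in $\mathbb{R}^d$. $TP(d)$ is the set of $d\times d$ real matrices with non-negative entries, columns summing to $1$, and $Tg=g$. The thermomajorization curve $\beta(p)$ of a state $p$ is the concave piecewise-linear curve from $(0,0)$ to $(1,1)$ whose segments have horizontal lengths $g_i$ and slopes $p_i/g_i$, arranged in non-increasing order of slope. *)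

theory Defs
  imports "HOL-Analysis.Analysis"
begin

text \<open>Energies are indexed by a finite type 'n (d = CARD('n)); the index i0 plays the role
of the ground level 0 with E i0 = 0.\<close>

definition qfac :: "real \<Rightarrow> ('n \<Rightarrow> real) \<Rightarrow> 'n \<Rightarrow> 'n \<Rightarrow> real" where
  "qfac \<beta> E m n = exp (- \<beta> * (E m - E n))"

definition partition_fn :: "real \<Rightarrow> ('n::finite \<Rightarrow> real) \<Rightarrow> 'n \<Rightarrow> real" where
  "partition_fn \<beta> E i0 = (\<Sum>j\<in>UNIV. qfac \<beta> E j i0)"

definition gibbs :: "real \<Rightarrow> ('n::finite \<Rightarrow> real) \<Rightarrow> 'n \<Rightarrow> real^'n" where
  "gibbs \<beta> E i0 = (\<chi> i. qfac \<beta> E i i0 / partition_fn \<beta> E i0)"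

definition is_state :: "real^'n::finite \<Rightarrow> bool" where
  "is_state p \<longleftrightarrow> (\<forall>i. 0 \<le> p $ i) \<and> (\<Sum>i\<in>UNIV. p $ i) = 1"

definition TP :: "real \<Rightarrow> ('n::finite \<Rightarrow> real) \<Rightarrow> 'n \<Rightarrow> (real^'n^'n) set" where
  "TP \<beta> E i0 = {T. (\<forall>i j. 0 \<le> T $ i $ j) \<and> (\<forall>j. (\<Sum>i\<in>UNIV. T $ i $ j) = 1)
                     \<and> T *v gibbs \<beta> E i0 = gibbs \<beta> E i0}"

definition TP_orbit :: "real \<Rightarrow> ('n::finite \<Rightarrow> real) \<Rightarrow> 'n \<Rightarrow> real^'n \<Rightarrow> (real^'n) set" where
  "TP_orbit \<beta> E i0 p = {T *v p | T. T \<in> TP \<beta> E i0}"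

definition sum_one_hyperplane :: "(real^'n::finite) set" where
  "sum_one_hyperplane = {x. (\<Sum>i\<in>UNIV. x $ i) = 1}"

end

theory Submission
  imports Defs
begin

text \<open>For \<open>g\<close> a positive probability vector, every rank-one update \<open>g 1\<^sup>T + u v\<^sup>T\<close> with
\<open>\<Sum> u = 0\<close> and \<open>v \<bullet> g = 0\<close> is column-stochastic, fixes \<open>g\<close> and sends a probability vector \<open>p\<close>
to \<open>g + (v \<bullet> p) u\<close>. If \<open>p \<noteq> g\<close> some such \<open>v\<close> has \<open>v \<bullet> p \<noteq> 0\<close>, so letting \<open>u\<close> range over small
zero-sum vectors reaches a whole neighbourhood of \<open>g\<close> in the hyperplane, while the entries stay
nonnegative because \<open>g\<close> is strictly positive.\<close>

definition stochastic_fixing :: "real^'n::finite \<Rightarrow> (real^'n^'n) set" where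
  "stochastic_fixing g = {T. (\<forall>i j. 0 \<le> T $ i $ j) \<and> (\<forall>j. (\<Sum>i\<in>UNIV. T $ i $ j) = 1) \<and> T *v g = g}"

lemma TP_eq_stochastic_fixing: "TP \<beta> E i0 = stochastic_fixing (gibbs \<beta> E i0)"
  unfolding TP_def stochastic_fixing_def ..

lemma partition_fn_pos: "0 < partition_fn \<beta> E i0"
  unfolding partition_fn_def qfac_def by (intro sum_pos) auto

lemma gibbs_pos: "0 < gibbs \<beta> E i0 $ i"
  using partition_fn_pos[of \<beta> E i0] unfolding gibbs_def qfac_def by simp

lemma sum_gibbs: "(\<Sum>i\<in>UNIV. gibbs \<beta> E i0 $ i) = 1"
  using partition_fn_pos[of \<beta> E i0] unfolding gibbs_def partition_fn_def
  by (simp flip: sum_divide_distrib)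

lemma exists_functional_separating:
  fixes g p :: "real^'n::finite"
  assumes "(\<Sum>i\<in>UNIV. g $ i) = 1" and "(\<Sum>i\<in>UNIV. p $ i) = 1" and "p \<noteq> g"
  shows "\<exists>v. v \<bullet> g = 0 \<and> v \<bullet> p \<noteq> 0"
proof -
  obtain k where k: "p $ k \<noteq> g $ k"
    using assms(3) by (metis vec_eq_iff)
  define v :: "real^'n" where "v = axis k 1 - (\<chi> _. g $ k)"
  have "v \<bullet> y = y $ k - g $ k * (\<Sum>i\<in>UNIV. y $ i)" for y
    by (simp add: v_def inner_diff_left inner_axis' sum_distrib_left inner_vec_def[of "\<chi> _. g $ k"])
  then have "v \<bullet> g = 0" and "v \<bullet> p = p $ k - g $ k"
    using assms(1,2) by simp_all
  then show ?thesis
    using k by auto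
qed

lemma rank_one_update_mult:
  fixes g u v y :: "real^'n::finite"
  shows "(\<chi> i j. g $ i + u $ i * v $ j) *v y = (\<Sum>j\<in>UNIV. y $ j) *\<^sub>R g + (v \<bullet> y) *\<^sub>R u"
  by (simp add: vec_eq_iff matrix_vector_mult_def inner_vec_def algebra_simps
      sum.distrib sum_distrib_left)

lemma rank_one_update_stochastic_fixing:
  fixes g u v :: "real^'n::finite"
  assumes "(\<Sum>i\<in>UNIV. g $ i) = 1" and "(\<Sum>i\<in>UNIV. u $ i) = 0" and "v \<bullet> g = 0"
    and "\<And>i j. \<bar>u $ i * v $ j\<bar> \<le> g $ i"
  shows "(\<chi> i j. g $ i + u $ i * v $ j) \<in> stochastic_fixing g"
proof -
  have "0 \<le> g $ i + u $ i * v $ j" for i j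
    using assms(4)[of i j] by linarith
  moreover have "(\<Sum>i\<in>UNIV. g $ i + u $ i * v $ j) = 1" for j
    using assms(1,2) by (simp add: sum.distrib flip: sum_distrib_right)
  ultimately show ?thesis
    using assms(1,3) by (simp add: stochastic_fixing_def rank_one_update_mult)
qed

lemma stochastic_fixing_orbit_contains_ball:
  fixes g p :: "real^'n::finite"
  assumes g_pos: "\<And>i. 0 < g $ i" and g_sum: "(\<Sum>i\<in>UNIV. g $ i) = 1"
    and p_sum: "(\<Sum>i\<in>UNIV. p $ i) = 1" and "p \<noteq> g"
  shows "\<exists>e>0. ball g e \<inter> sum_one_hyperplane \<subseteq> {T *v p | T. T \<in> stochastic_fixing g}"
proof -
  obtain v where vg: "v \<bullet> g = 0" and vp: "v \<bullet> p \<noteq> 0"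
    using exists_functional_separating[OF g_sum p_sum \<open>p \<noteq> g\<close>] by blast
  define m where "m = Min (range (($) g))"
  have m_pos: "0 < m" and m_le: "\<And>i. m \<le> g $ i"
    using g_pos by (auto simp: m_def)
  have v_norm: "0 < norm v"
    using vp by auto
  define e where "e = \<bar>v \<bullet> p\<bar> * m / norm v"
  have "x \<in> {T *v p | T. T \<in> stochastic_fixing g}"
    if x: "dist g x < e" "(\<Sum>i\<in>UNIV. x $ i) = 1" for x
  proof -
    define u where "u = (1 / (v \<bullet> p)) *\<^sub>R (x - g)"
    have u_sum: "(\<Sum>i\<in>UNIV. u $ i) = 0"
      using x(2) g_sum by (simp add: u_def sum_subtractf flip: sum_divide_distrib)
    have "\<bar>u $ i * v $ j\<bar> \<le> g $ i" for i j
    proof -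
      have "\<bar>u $ i * v $ j\<bar> \<le> norm u * norm v"
        unfolding abs_mult by (intro mult_mono component_le_norm_cart) auto
      also have "\<dots> = dist g x / \<bar>v \<bullet> p\<bar> * norm v"
        by (simp add: u_def dist_norm norm_minus_commute)
      also have "\<dots> \<le> m"
        using x(1) vp v_norm by (simp add: e_def field_simps)
      finally show ?thesis
        using m_le[of i] by simp
    qed
    then have "(\<chi> i j. g $ i + u $ i * v $ j) \<in> stochastic_fixing g"
      using rank_one_update_stochastic_fixing[OF g_sum u_sum vg] by blast
    moreover have "(\<chi> i j. g $ i + u $ i * v $ j) *v p = x"
      unfolding rank_one_update_mult using p_sum vp by (simp add: u_def)
    ultimately show ?thesis
      by blast
  qed
  moreover have "0 < e"
    using vp m_pos v_norm by (simp add: e_def)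
  ultimately show ?thesis
    by (auto simp: sum_one_hyperplane_def)
qed

theorem mainTheorem6:
  fixes \<beta> :: real and E :: "'n::finite \<Rightarrow> real" and i0 :: 'n and p :: "real^'n"
  assumes "CARD('n) \<ge> 2"
    and "0 < \<beta>"
    and "inj E"
    and "E i0 = 0"
    and "is_state p"
    and "p \<noteq> gibbs \<beta> E i0"
  shows "\<exists>e>0. ball (gibbs \<beta> E i0) e \<inter> sum_one_hyperplane \<subseteq> TP_orbit \<beta> E i0 p"
  using stochastic_fixing_orbit_contains_ball[OF gibbs_pos sum_gibbs _ assms(6)] assms(5)
  by (simp add: is_state_def TP_orbit_def TP_eq_stochastic_fixing)

end
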